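(* The function $\nabla = \cos^2 \tfrac{2}{3}\psi$ is not elliptic; that is, it does not admit an extension from a small disc about $0$ to an elliptic (doubly periodic meromorphic) function on $\mathbb{C}$.
   Context: Let $0<\kappa<1$ and $\lambda=\sqrt{1-\kappa^2}\in(0,1)$. Let $F(\tfrac16,\tfrac56;\tfrac12;\cdot)$ denote the Gauss hypergeometric function. Define $u$ as a function of $\phi$ near $0$ by $u=\int_0^{\sin\phi}F(\tfrac16,\tfrac56;\tfrac12;\kappa^2t^2)\,\frac{dt}{\sqrt{1-t^2}}$; near the origin (fixing $0$) this inverts to a holomorphic function $u\mapsto\phi(u)$ with $\phi(0)=0$. Let $\psi$ be the holomorphic function near $0$ with $\psi(0)=0$ and $\sin\psi=\kappa\sin\phi$. Set $\partial=\cos\tfrac23\psi$ and $\nabla=\partial^2$, regarded as functions of $u$ on a small disc about $0$. *)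

theory Defs
  imports "HOL-Complex_Analysis.Complex_Analysis"
begin

text \<open>Gauss hypergeometric series F(a,b;c;z) (meaningful for norm z < 1).\<close>
definition hyp2F1 :: "complex \<Rightarrow> complex \<Rightarrow> complex \<Rightarrow> complex \<Rightarrow> complex" where
  "hyp2F1 a b c z =
     (\<Sum>n. pochhammer a n * pochhammer b n / (pochhammer c n * fact n) * z ^ n)"

definition u_of_phi :: "real \<Rightarrow> complex \<Rightarrow> complex" where
  "u_of_phi \<kappa> \<phi> = contour_integral (linepath 0 (sin \<phi>))
      (\<lambda>t. hyp2F1 (1/6) (5/6) (1/2) ((complex_of_real \<kappa>)\<^sup>2 * t\<^sup>2) / csqrt (1 - t\<^sup>2))"

text \<open>Elliptic function: meromorphic on C with two R-linearly independent periods.\<close>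
definition elliptic :: "(complex \<Rightarrow> complex) \<Rightarrow> bool" where
  "elliptic g \<longleftrightarrow> g meromorphic_on UNIV \<and>
     (\<exists>\<omega>1 \<omega>2. Im (\<omega>2 * cnj \<omega>1) \<noteq> 0 \<and>
        (\<forall>z. g (z + \<omega>1) = g z) \<and> (\<forall>z. g (z + \<omega>2) = g z))"

end

theory Submission
  imports Defs
begin

text \<open>
  The Gauss series satisfies \<open>F(a, 1 - a; 1/2; sin\<^sup>2 x) cos x = cos ((1 - 2a) x)\<close>; for \<open>a = 1/6\<close>
  this turns \<open>du/d\<phi> = F(1/6, 5/6; 1/2; sin\<^sup>2 \<psi>)\<close> into \<open>\<psi>' cos (2\<psi>/3) = \<kappa> cos \<phi>\<close>, and then
  \<open>\<nabla> = cos\<^sup>2 (2\<psi>/3)\<close> satisfies the first-order equation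
  \<open>(\<nabla>'\<^sup>2 - \<alpha> (1 - \<nabla>))\<^sup>2 = \<beta>\<^sup>2 (1 - \<nabla>)\<^sup>2 \<nabla> (2\<nabla> - 3/2)\<^sup>2\<close> with \<open>\<alpha> = 16/9 (\<kappa>\<^sup>2 - 1/2)\<close>, \<open>\<beta> = 16/9\<close>.
  An elliptic extension of \<open>\<nabla>\<close> satisfies it on all of \<open>\<complex>\<close>, so it has no zeros: at a zero of order
  \<open>m\<close> the right-hand side vanishes to order \<open>m\<close> and the left-hand side to even order, so \<open>m \<ge> 2\<close>;
  then \<open>\<nabla>'\<close> vanishes there, which forces \<open>\<alpha> = 0\<close>, and the left-hand side vanishes to order
  \<open>4(m - 1) \<noteq> m\<close>. Hence its reciprocal is an entire elliptic function, constant by Liouville's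
  theorem, whereas \<open>\<nabla>\<close> is not constant.
\<close>

section \<open>The Gauss hypergeometric series\<close>

definition hyp2F1_coeff :: "complex \<Rightarrow> complex \<Rightarrow> complex \<Rightarrow> nat \<Rightarrow> complex" where
  "hyp2F1_coeff a b c n = pochhammer a n * pochhammer b n / (pochhammer c n * fact n)"

definition fps_hyp2F1 :: "complex \<Rightarrow> complex \<Rightarrow> complex \<Rightarrow> complex fps" where
  "fps_hyp2F1 a b c = Abs_fps (hyp2F1_coeff a b c)"

lemma hyp2F1_eq_eval_fps: "hyp2F1 a b c z = eval_fps (fps_hyp2F1 a b c) z"
  by (simp add: hyp2F1_def eval_fps_def fps_hyp2F1_def hyp2F1_coeff_def)

text \<open>This also holds when \<open>c + n = 0\<close>: both sides are then \<open>0\<close>, by division by zero.\<close>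
lemma hyp2F1_coeff_Suc:
  "hyp2F1_coeff a b c (Suc n) =
     hyp2F1_coeff a b c n * ((a + of_nat n) * (b + of_nat n) / ((c + of_nat n) * of_nat (Suc n)))"
  by (simp add: hyp2F1_coeff_def pochhammer_Suc fact_Suc field_simps del: of_nat_Suc)

lemma hyp2F1_coeff_recurrence:
  assumes "c + of_nat n \<noteq> 0"
  shows "hyp2F1_coeff a b c (Suc n) * ((c + of_nat n) * of_nat (Suc n)) =
           hyp2F1_coeff a b c n * ((a + of_nat n) * (b + of_nat n))"
  using assms by (simp add: hyp2F1_coeff_Suc del: of_nat_Suc)

lemma tendsto_add_of_nat_ratio:
  fixes x y :: "'a :: real_normed_field"
  shows "(\<lambda>n. (x + of_nat n) / (y + of_nat n)) \<longlonglongrightarrow> 1"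
proof (rule Lim_transform_eventually)
  show "(\<lambda>n. (x / of_nat n + 1) / (y / of_nat n + 1)) \<longlonglongrightarrow> 1"
    by (auto intro!: tendsto_eq_intros)
  show "\<forall>\<^sub>F n in sequentially. (x / of_nat n + 1) / (y / of_nat n + 1) = (x + of_nat n) / (y + of_nat n)"
    using eventually_gt_at_top[of "0::nat"]
  proof eventually_elim
    case (elim n)
    then have "x / of_nat n + 1 = (x + of_nat n) / of_nat n" "y / of_nat n + 1 = (y + of_nat n) / of_nat n"
      by (simp_all add: field_simps)
    then show ?case using elim by simp
  qed
qed

lemma fps_conv_radius_hyp2F1: "fps_conv_radius (fps_hyp2F1 a b c) \<ge> 1"
proof (cases "\<exists>n. hyp2F1_coeff a b c n = 0")
  case True
  then obtain n where "hyp2F1_coeff a b c n = 0" by blast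
  then have "pochhammer a n = 0 \<or> pochhammer b n = 0 \<or> pochhammer c n = 0"
    by (simp add: hyp2F1_coeff_def)
  then have "hyp2F1_coeff a b c m = 0" if "m \<ge> n" for m
    using that by (auto simp: hyp2F1_coeff_def dest: pochhammer_eq_0_mono)
  then have "eventually (\<lambda>m. hyp2F1_coeff a b c m = 0) sequentially"
    by (rule eventually_sequentiallyI)
  then have "conv_radius (hyp2F1_coeff a b c) = conv_radius (\<lambda>_. 0 :: complex)"
    by (rule conv_radius_cong')
  then show ?thesis by (simp add: fps_conv_radius_def fps_hyp2F1_def)
next
  case False
  have ratio: "norm (hyp2F1_coeff a b c n) / norm (hyp2F1_coeff a b c (Suc n)) =
      norm ((c + of_nat n) / (a + of_nat n) * ((1 + of_nat n) / (b + of_nat n)))" for n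
  proof -
    have "norm (1 + of_nat n :: complex) = real (Suc n)"
      by (metis norm_of_nat of_nat_Suc add.commute)
    then show ?thesis
      using False by (simp add: hyp2F1_coeff_Suc norm_mult norm_divide add_ac del: of_nat_Suc)
  qed
  have "(\<lambda>n. norm ((c + of_nat n) / (a + of_nat n) * ((1 + of_nat n) / (b + of_nat n))))
          \<longlonglongrightarrow> norm (1 * 1 :: complex)"
    by (intro tendsto_intros tendsto_add_of_nat_ratio)
  then have "(\<lambda>n. norm (hyp2F1_coeff a b c n) / norm (hyp2F1_coeff a b c (Suc n))) \<longlonglongrightarrow> 1"
    by (simp add: ratio)
  then have "conv_radius (hyp2F1_coeff a b c) = 1"
    by (intro conv_radius_ratio_limit_nonzero) auto
  then show ?thesis by (simp add: fps_conv_radius_def fps_hyp2F1_def)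
qed

lemma holomorphic_on_hyp2F1 [holomorphic_intros]:
  assumes f: "f holomorphic_on A" "\<And>z. z \<in> A \<Longrightarrow> norm (f z) < 1"
  shows "(\<lambda>z. hyp2F1 a b c (f z)) holomorphic_on A"
proof -
  have "ball (0::complex) 1 \<subseteq> eball 0 (fps_conv_radius (fps_hyp2F1 a b c))"
  proof
    fix z :: complex assume "z \<in> ball 0 1"
    then have "ereal (dist 0 z) < 1" by simp
    then show "z \<in> eball 0 (fps_conv_radius (fps_hyp2F1 a b c))"
      unfolding in_eball_iff using fps_conv_radius_hyp2F1 by (rule less_le_trans)
  qed
  then have "eval_fps (fps_hyp2F1 a b c) holomorphic_on ball 0 1"
    by (rule holomorphic_on_eval_fps)
  moreover have "f ` A \<subseteq> ball 0 1" using f(2) by auto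
  ultimately have "(eval_fps (fps_hyp2F1 a b c) \<circ> f) holomorphic_on A"
    by (rule holomorphic_on_compose_gen[OF f(1)])
  then show ?thesis
    by (simp add: o_def hyp2F1_eq_eval_fps)
qed

lemma fps_hyp2F1_ode:
  fixes a b c :: complex
  defines "F \<equiv> fps_hyp2F1 a b c"
  assumes c: "\<And>n. c + of_nat n \<noteq> 0"
  shows "fps_X * (1 - fps_X) * fps_deriv (fps_deriv F)
           + (fps_const c - fps_const (a + b + 1) * fps_X) * fps_deriv F = fps_const (a * b) * F"
    (is "?L = ?R")
proof (rule fps_ext)
  fix n
  let ?h = "hyp2F1_coeff a b c"
  have "fps_nth ?L n = ?h (Suc n) * ((c + of_nat n) * of_nat (Suc n)) - ?h n * (of_nat n * (a + b + of_nat n))"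
  proof (cases n)
    case 0
    then show ?thesis by (simp add: F_def fps_hyp2F1_def algebra_simps)
  next
    case (Suc m)
    then show ?thesis
      by (cases m) (simp_all add: F_def fps_hyp2F1_def algebra_simps fps_X_mult_nth power2_eq_square)
  qed
  also have "\<dots> = ?h n * (a * b)"
    unfolding hyp2F1_coeff_recurrence[OF c] by (simp add: algebra_simps)
  also have "\<dots> = fps_nth ?R n"
    by (simp add: F_def fps_hyp2F1_def)
  finally show "fps_nth ?L n = fps_nth ?R n" .
qed

lemma less_fps_conv_radius_add:
  "r < fps_conv_radius f \<Longrightarrow> r < fps_conv_radius g \<Longrightarrow> r < fps_conv_radius (f + g)"
  using fps_conv_radius_add[of f g] by (meson less_le_trans min_less_iff_conj)

lemma less_fps_conv_radius_diff:
  "r < fps_conv_radius f \<Longrightarrow> r < fps_conv_radius g \<Longrightarrow> r < fps_conv_radius (f - g)"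
  using fps_conv_radius_diff[of f g] by (meson less_le_trans min_less_iff_conj)

lemma less_fps_conv_radius_mult:
  "r < fps_conv_radius f \<Longrightarrow> r < fps_conv_radius g \<Longrightarrow> r < fps_conv_radius (f * g)"
  using fps_conv_radius_mult[of f g] by (meson less_le_trans min_less_iff_conj)

lemma hyp2F1_ode:
  fixes a b c z :: complex
  defines "F \<equiv> fps_hyp2F1 a b c"
  assumes c: "\<And>n. c + of_nat n \<noteq> 0" and z: "norm z < 1"
  shows "z * (1 - z) * eval_fps (fps_deriv (fps_deriv F)) z + (c - (a + b + 1) * z) * eval_fps (fps_deriv F) z
           = a * b * eval_fps F z"
proof -
  have "ereal (norm z) < fps_conv_radius F"
    using z fps_conv_radius_hyp2F1[of a b c] by (simp add: F_def) (meson less_le_trans ereal_less(3))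
  moreover note fps_conv_radius_deriv[of F] fps_conv_radius_deriv[of "fps_deriv F"]
  ultimately have rad: "ereal (norm z) < fps_conv_radius F" "ereal (norm z) < fps_conv_radius (fps_deriv F)"
      "ereal (norm z) < fps_conv_radius (fps_deriv (fps_deriv F))"
    by (meson less_le_trans)+
  have "eval_fps (fps_X * (1 - fps_X) * fps_deriv (fps_deriv F)
          + (fps_const c - fps_const (a + b + 1) * fps_X) * fps_deriv F) z = eval_fps (fps_const (a * b) * F) z"
    unfolding F_def fps_hyp2F1_ode[OF c] ..
  then show ?thesis
    by (simp add: eval_fps_add eval_fps_diff eval_fps_mult rad less_fps_conv_radius_add
        less_fps_conv_radius_diff less_fps_conv_radius_mult)
qed

section \<open>A closed form of the series at \<open>sin\<^sup>2 x\<close>\<close>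

lemma linear_ode_eq_exp:
  fixes Y :: "complex \<Rightarrow> complex"
  assumes S: "convex S" "0 \<in> S" and x: "x \<in> S"
    and Y: "\<And>y. y \<in> S \<Longrightarrow> (Y has_field_derivative l * Y y) (at y)"
  shows "Y x = Y 0 * exp (l * x)"
proof -
  have "\<exists>k. \<forall>y\<in>S. Y y * exp (- (l * y)) = k"
  proof (rule has_field_derivative_zero_constant[OF S(1)])
    fix y assume "y \<in> S"
    then have "((\<lambda>y. Y y * exp (- (l * y))) has_field_derivative
        l * Y y * exp (- (l * y)) + Y y * (exp (- (l * y)) * - l)) (at y)"
      by (auto intro!: derivative_eq_intros Y)
    then show "((\<lambda>y. Y y * exp (- (l * y))) has_field_derivative 0) (at y within S)"
      by (simp add: algebra_simps has_field_derivative_at_within)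
  qed
  then have "Y x * exp (- (l * x)) = Y 0" using S x by force
  then show ?thesis by (simp add: exp_minus field_simps)
qed

lemma cos_ode_unique:
  fixes Z Z' :: "complex \<Rightarrow> complex"
  assumes S: "convex S" "0 \<in> S" and x: "x \<in> S"
    and Z: "\<And>y. y \<in> S \<Longrightarrow> (Z has_field_derivative Z' y) (at y)"
    and Z': "\<And>y. y \<in> S \<Longrightarrow> (Z' has_field_derivative - (w\<^sup>2 * Z y)) (at y)"
    and init: "Z 0 = 1" "Z' 0 = 0"
  shows "Z x = cos (w * x)"
proof -
  define D where "D y = Z y - cos (w * y)" for y
  define D' where "D' y = Z' y + w * sin (w * y)" for y
  have D: "(D has_field_derivative D' y) (at y)" if "y \<in> S" for y
    unfolding D_def D'_def using that by (auto intro!: derivative_eq_intros Z)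
  \<comment> \<open>\<open>D'' + w\<^sup>2 D = 0\<close> factors as \<open>(d/dx - \<i>w) (D' + \<i>w D) = 0\<close>.\<close>
  have Y: "D' y + \<i> * w * D y = (D' 0 + \<i> * w * D 0) * exp (\<i> * w * y)" if "y \<in> S" for y
  proof (rule linear_ode_eq_exp[OF S that])
    fix y assume "y \<in> S"
    then show "((\<lambda>y. D' y + \<i> * w * D y) has_field_derivative \<i> * w * (D' y + \<i> * w * D y)) (at y)"
      unfolding D'_def
      by (auto intro!: derivative_eq_intros Z Z' simp: D_def algebra_simps power2_eq_square)
  qed
  have "D' 0 + \<i> * w * D 0 = 0"
    using init by (simp add: D_def D'_def)
  then have D'_eq: "D' y = - \<i> * w * D y" if "y \<in> S" for y
    using Y[OF that] by (simp add: eq_neg_iff_add_eq_0)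
  have "D x = D 0 * exp (- \<i> * w * x)"
    by (rule linear_ode_eq_exp[OF S x]) (use D D'_eq in auto)
  then show ?thesis using init by (simp add: D_def)
qed

lemma has_field_derivative_eval_fps_sin_squared:
  fixes G :: "complex fps"
  assumes "norm ((sin x)\<^sup>2) < fps_conv_radius G"
  shows "((\<lambda>x. eval_fps G ((sin x)\<^sup>2)) has_field_derivative
           eval_fps (fps_deriv G) ((sin x)\<^sup>2) * (2 * sin x * cos x)) (at x)"
proof (rule DERIV_chain2[where g = "\<lambda>x. (sin x)\<^sup>2"])
  show "(eval_fps G has_field_derivative eval_fps (fps_deriv G) ((sin x)\<^sup>2)) (at ((sin x)\<^sup>2))"
    by (rule has_field_derivative_eval_fps[OF assms])
qed (auto intro!: derivative_eq_intros)

lemma hyp2F1_half_ode_sin_squared: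
  fixes a y :: complex
  defines "F \<equiv> fps_hyp2F1 a (1 - a) (1/2)"
  assumes y: "norm ((sin y)\<^sup>2) < 1"
  shows "(sin y)\<^sup>2 * (cos y)\<^sup>2 * eval_fps (fps_deriv (fps_deriv F)) ((sin y)\<^sup>2)
           + (1/2 - 2 * (sin y)\<^sup>2) * eval_fps (fps_deriv F) ((sin y)\<^sup>2) = a * (1 - a) * eval_fps F ((sin y)\<^sup>2)"
proof -
  have "1/2 + of_nat n \<noteq> (0::complex)" for n
  proof
    assume "1/2 + of_nat n = (0::complex)"
    then have "Re (1/2 + of_nat n :: complex) = 0" by simp
    then show False by simp
  qed
  from hyp2F1_ode[where a = a and b = "1 - a" and c = "1/2", OF this y] show ?thesis
    by (simp add: F_def cos_squared_eq)
qed

lemma hyp2F1_sin_squared_mult_cos: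
  fixes a :: complex
  shows "eventually (\<lambda>x. hyp2F1 a (1 - a) (1/2) ((sin x)\<^sup>2) * cos x = cos ((1 - 2 * a) * x)) (nhds 0)"
proof -
  define F where "F = fps_hyp2F1 a (1 - a) (1/2)"
  have "open {x::complex. norm ((sin x)\<^sup>2) < 1}"
    by (intro open_Collect_less continuous_intros)
  moreover have "(0::complex) \<in> {x. norm ((sin x)\<^sup>2) < 1}" by simp
  ultimately obtain \<rho> where \<rho>: "\<rho> > 0" "ball 0 \<rho> \<subseteq> {x::complex. norm ((sin x)\<^sup>2) < 1}"
    using open_contains_ball by blast
  have rad: "1 \<le> fps_conv_radius F" "1 \<le> fps_conv_radius (fps_deriv F)"
    using fps_conv_radius_hyp2F1 fps_conv_radius_deriv[of F] order.trans unfolding F_def by blast+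
  define Z where "Z x = eval_fps F ((sin x)\<^sup>2) * cos x" for x
  define Z' where "Z' x = eval_fps (fps_deriv F) ((sin x)\<^sup>2) * (2 * sin x * cos x) * cos x
                          - eval_fps F ((sin x)\<^sup>2) * sin x" for x
  have "Z x = cos ((1 - 2 * a) * x)" if x: "x \<in> ball 0 \<rho>" for x
  proof (rule cos_ode_unique[OF convex_ball _ x])
    show "Z 0 = 1" "Z' 0 = 0"
      by (simp_all add: Z_def Z'_def eval_fps_at_0 F_def fps_hyp2F1_def hyp2F1_coeff_def)
  next
    fix y :: complex assume y: "y \<in> ball 0 \<rho>"
    then have small: "norm ((sin y)\<^sup>2) < 1"
      using \<rho>(2) by blast
    then have "ereal (norm ((sin y)\<^sup>2)) < 1"
      by simp
    note dF = has_field_derivative_eval_fps_sin_squared[OF less_le_trans[OF this rad(1)]]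
      has_field_derivative_eval_fps_sin_squared[OF less_le_trans[OF this rad(2)]]
    show "(Z has_field_derivative Z' y) (at y)"
      unfolding Z_def Z'_def by (rule derivative_eq_intros dF refl | simp)+
    let ?D = "eval_fps (fps_deriv (fps_deriv F)) ((sin y)\<^sup>2) * (2 * sin y * cos y) * (2 * sin y * cos y) * cos y
        + eval_fps (fps_deriv F) ((sin y)\<^sup>2) * (2 * (cos y * cos y - sin y * sin y) * cos y - 2 * sin y * cos y * sin y)
        - (eval_fps (fps_deriv F) ((sin y)\<^sup>2) * (2 * sin y * cos y) * sin y + eval_fps F ((sin y)\<^sup>2) * cos y)"
    have "(Z' has_field_derivative ?D) (at y)"
      unfolding Z'_def by (rule derivative_eq_intros dF refl | simp add: algebra_simps)+
    moreover have "?D = - ((1 - 2 * a)\<^sup>2 * Z y)"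
      using hyp2F1_half_ode_sin_squared[OF small, of a] sin_cos_squared_add[of y]
      unfolding Z_def F_def by algebra
    ultimately show "(Z' has_field_derivative - ((1 - 2 * a)\<^sup>2 * Z y)) (at y)" by simp
  qed (use \<rho> in auto)
  then show ?thesis
    unfolding Z_def F_def hyp2F1_eq_eval_fps eventually_nhds using \<rho>(1)
    by (intro exI[of _ "ball 0 \<rho>"]) auto
qed

section \<open>The differential equation satisfied by \<open>\<nabla>\<close>\<close>

lemma holomorphic_on_u_of_phi_integrand:
  assumes \<kappa>: "\<bar>\<kappa>\<bar> \<le> 1"
  shows "(\<lambda>t. hyp2F1 a b c ((of_real \<kappa>)\<^sup>2 * t\<^sup>2) / csqrt (1 - t\<^sup>2)) holomorphic_on ball 0 1"
proof -
  have small: "norm (t\<^sup>2) < 1" if "t \<in> ball 0 1" for t :: complex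
    using that by (simp add: norm_power power_less_one_iff)
  have "norm ((of_real \<kappa>)\<^sup>2 * t\<^sup>2) < 1" if "t \<in> ball 0 1" for t :: complex
  proof -
    have "norm ((of_real \<kappa>)\<^sup>2 :: complex) \<le> 1"
      using \<kappa> by (simp add: norm_power abs_square_le_1)
    then show ?thesis
      using small[OF that] by (simp add: norm_mult) (meson mult_left_le_one_le norm_ge_zero le_less_trans)
  qed
  moreover have "1 - t\<^sup>2 \<notin> \<real>\<^sub>\<le>\<^sub>0" "csqrt (1 - t\<^sup>2) \<noteq> 0" if "t \<in> ball 0 1" for t :: complex
  proof -
    have "Re (t\<^sup>2) < 1" using complex_Re_le_cmod[of "t\<^sup>2"] small[OF that] by linarith
    then show "1 - t\<^sup>2 \<notin> \<real>\<^sub>\<le>\<^sub>0" "csqrt (1 - t\<^sup>2) \<noteq> 0"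
      by (auto simp: complex_nonpos_Reals_iff)
  qed
  ultimately show ?thesis
    by (intro holomorphic_intros)
qed

lemma has_field_derivative_u_of_phi:
  assumes \<kappa>: "\<bar>\<kappa>\<bar> \<le> 1" and z: "norm (sin z) < 1" "0 < Re (cos z)"
  shows "(u_of_phi \<kappa> has_field_derivative hyp2F1 (1/6) (5/6) (1/2) ((of_real \<kappa> * sin z)\<^sup>2)) (at z)"
proof -
  define f where "f t = hyp2F1 (1/6) (5/6) (1/2) ((of_real \<kappa>)\<^sup>2 * t\<^sup>2) / csqrt (1 - t\<^sup>2)" for t
  obtain P where P: "\<And>t. t \<in> ball 0 1 \<Longrightarrow> (P has_field_derivative f t) (at t within ball 0 1)"
    using holomorphic_convex_primitive'[OF convex_ball open_ball holomorphic_on_u_of_phi_integrand[OF \<kappa>]]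
    unfolding f_def by blast
  have u_eq: "u_of_phi \<kappa> w = P (sin w) - P 0" if "w \<in> {w. norm (sin w) < 1}" for w
  proof -
    have "(f has_contour_integral P (sin w) - P 0) (linepath 0 (sin w))"
      using contour_integral_primitive[OF P, of "linepath 0 (sin w)"] that
      by (simp add: closed_segment_subset)
    then show ?thesis
      unfolding u_of_phi_def f_def by (simp add: contour_integral_unique)
  qed
  have "(P has_field_derivative f (sin z)) (at (sin z))"
    using P[of "sin z"] z(1) at_within_open[of "sin z" "ball 0 1"] by simp
  then have "((\<lambda>w. P (sin w) - P 0) has_field_derivative f (sin z) * cos z) (at z)"
    by (auto intro!: derivative_eq_intros DERIV_chain2[of P])
  moreover have "open {w::complex. norm (sin w) < 1}"
    by (intro open_Collect_less continuous_intros)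
  ultimately have "(u_of_phi \<kappa> has_field_derivative f (sin z) * cos z) (at z)"
    by (rule has_field_derivative_transform_within_open) (use z(1) u_eq in simp_all)
  moreover have "csqrt (1 - (sin z)\<^sup>2) = cos z"
    using csqrt_square[of "cos z"] z(2) by (simp add: cos_squared_eq)
  moreover have "cos z \<noteq> 0"
    using z(2) by auto
  ultimately show ?thesis
    by (simp add: f_def power_mult_distrib)
qed

lemma deriv_psi_mult_cos_two_thirds:
  fixes \<phi> \<psi> :: "complex \<Rightarrow> complex"
  assumes S: "open S" "u \<in> S" and holo: "\<phi> holomorphic_on S" "\<psi> holomorphic_on S"
    and \<kappa>: "\<bar>\<kappa>\<bar> \<le> 1"
    and inv: "\<And>w. w \<in> S \<Longrightarrow> u_of_phi \<kappa> (\<phi> w) = w"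
    and sin: "\<And>w. w \<in> S \<Longrightarrow> sin (\<psi> w) = of_real \<kappa> * sin (\<phi> w)"
    and u: "norm (sin (\<phi> u)) < 1" "0 < Re (cos (\<phi> u))" "cos (\<psi> u) \<noteq> 0"
    and closed: "hyp2F1 (1/6) (5/6) (1/2) ((sin (\<psi> u))\<^sup>2) * cos (\<psi> u) = cos (2/3 * \<psi> u)"
  shows "deriv \<psi> u * cos (2/3 * \<psi> u) = of_real \<kappa> * cos (\<phi> u)"
proof -
  have d\<phi>: "(\<phi> has_field_derivative deriv \<phi> u) (at u)"
    and d\<psi>: "(\<psi> has_field_derivative deriv \<psi> u) (at u)"
    using holo S by (auto intro: holomorphic_derivI)
  have "((\<lambda>w. u_of_phi \<kappa> (\<phi> w)) has_field_derivative
          hyp2F1 (1/6) (5/6) (1/2) ((sin (\<psi> u))\<^sup>2) * deriv \<phi> u) (at u)"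
    using DERIV_chain2[OF has_field_derivative_u_of_phi[OF \<kappa> u(1,2)] d\<phi>] sin[OF S(2)]
    by (simp add: mult.assoc)
  moreover have "((\<lambda>w. u_of_phi \<kappa> (\<phi> w)) has_field_derivative 1) (at u)"
    using has_field_derivative_transform_within_open[OF DERIV_ident S] inv by simp
  ultimately have "hyp2F1 (1/6) (5/6) (1/2) ((sin (\<psi> u))\<^sup>2) * deriv \<phi> u = 1"
    by (rule DERIV_unique)
  then have \<phi>': "cos (2/3 * \<psi> u) * deriv \<phi> u = cos (\<psi> u)"
    unfolding closed[symmetric] by (simp add: algebra_simps)
  have "((\<lambda>w. sin (\<psi> w)) has_field_derivative cos (\<psi> u) * deriv \<psi> u) (at u)"
    using d\<psi> by (auto intro!: derivative_eq_intros)
  moreover have "((\<lambda>w. of_real \<kappa> * sin (\<phi> w)) has_field_derivative of_real \<kappa> * (cos (\<phi> u) * deriv \<phi> u)) (at u)"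
    using d\<phi> by (auto intro!: derivative_eq_intros)
  then have "((\<lambda>w. sin (\<psi> w)) has_field_derivative of_real \<kappa> * (cos (\<phi> u) * deriv \<phi> u)) (at u)"
    by (rule has_field_derivative_transform_within_open[OF _ S]) (simp add: sin)
  ultimately have \<psi>': "cos (\<psi> u) * deriv \<psi> u = of_real \<kappa> * (cos (\<phi> u) * deriv \<phi> u)"
    by (rule DERIV_unique)
  have "cos (\<psi> u) * (deriv \<psi> u * cos (2/3 * \<psi> u)) = cos (2/3 * \<psi> u) * (cos (\<psi> u) * deriv \<psi> u)"
    by (simp only: ac_simps)
  also have "\<dots> = of_real \<kappa> * cos (\<phi> u) * (cos (2/3 * \<psi> u) * deriv \<phi> u)"
    unfolding \<psi>' by (simp only: ac_simps)
  also have "\<dots> = cos (\<psi> u) * (of_real \<kappa> * cos (\<phi> u))"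
    unfolding \<phi>' by (simp only: ac_simps)
  finally show ?thesis
    using u(3) by simp
qed

lemma eventually_nhds_compose_isCont:
  assumes "eventually P (nhds y)" "isCont f x" "f x = y"
  shows "eventually (\<lambda>x. P (f x)) (nhds x)"
  unfolding eventually_nhds_conv_at
proof
  show "eventually (\<lambda>x. P (f x)) (at x)"
    using assms(1) assms(2)[unfolded isCont_def assms(3)] by (rule eventually_compose_filterlim)
  show "P (f x)"
    using assms(1) assms(3) eventually_nhds_x_imp_x by blast
qed

lemma eventually_deriv_cong:
  assumes "eventually (\<lambda>z. f z = g z) (nhds x)"
  shows "eventually (\<lambda>z. deriv f z = deriv g z) (nhds x)"
proof -
  have "eventually (\<lambda>z. eventually (\<lambda>w. f w = g w) (nhds z)) (nhds x)"
    using assms by (simp add: eventually_eventually)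
  then show ?thesis
    by eventually_elim (rule deriv_cong_ev, simp_all)
qed

lemma deriv_cos_two_thirds_sq:
  fixes \<phi> \<psi> :: "complex \<Rightarrow> complex"
  assumes \<kappa>: "\<bar>\<kappa>\<bar> \<le> 1" and r: "0 < r"
    and holo: "\<phi> holomorphic_on ball 0 r" "\<psi> holomorphic_on ball 0 r" and zero: "\<phi> 0 = 0" "\<psi> 0 = 0"
    and inv: "\<forall>u\<in>ball 0 r. u_of_phi \<kappa> (\<phi> u) = u"
    and sin: "\<forall>u\<in>ball 0 r. sin (\<psi> u) = of_real \<kappa> * sin (\<phi> u)"
  shows "eventually (\<lambda>u. deriv (\<lambda>u. (cos (2/3 * \<psi> u))\<^sup>2) u =
                           - 4/3 * sin (2/3 * \<psi> u) * of_real \<kappa> * cos (\<phi> u)) (nhds 0)"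
proof -
  have cont: "isCont \<phi> 0" "isCont \<psi> 0"
    using holo r by (auto simp: continuous_on_eq_continuous_at dest!: holomorphic_on_imp_continuous_on)
  have "open {z::complex. norm (sin z) < 1 \<and> 0 < Re (cos z)}"
    by (intro open_Collect_conj open_Collect_less continuous_intros)
  from eventually_nhds_in_open[OF this, of 0]
  have small: "eventually (\<lambda>z. norm (sin z) < 1 \<and> 0 < Re (cos z)) (nhds (0::complex))"
    by simp
  have closed: "eventually (\<lambda>z. hyp2F1 (1/6) (5/6) (1/2) ((sin z)\<^sup>2) * cos z = cos (2/3 * z)) (nhds 0)"
    using hyp2F1_sin_squared_mult_cos[of "1/6"] by simp
  have "eventually (\<lambda>u. u \<in> ball 0 r) (nhds 0)"
    using r by (intro eventually_nhds_in_open) auto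
  moreover have "eventually (\<lambda>u. norm (sin (\<phi> u)) < 1 \<and> 0 < Re (cos (\<phi> u))) (nhds 0)"
    using eventually_nhds_compose_isCont[OF small cont(1) zero(1)] by simp
  moreover have "eventually (\<lambda>u. (norm (sin (\<psi> u)) < 1 \<and> 0 < Re (cos (\<psi> u))) \<and>
      hyp2F1 (1/6) (5/6) (1/2) ((sin (\<psi> u))\<^sup>2) * cos (\<psi> u) = cos (2/3 * \<psi> u)) (nhds 0)"
    using eventually_nhds_compose_isCont[OF eventually_conj[OF small closed] cont(2) zero(2)] by simp
  ultimately show ?thesis
  proof eventually_elim
    case (elim u)
    have d\<psi>: "(\<psi> has_field_derivative deriv \<psi> u) (at u)"
      by (rule holomorphic_derivI[OF holo(2) open_ball elim(1)])
    have "deriv \<psi> u * cos (2/3 * \<psi> u) = of_real \<kappa> * cos (\<phi> u)"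
    proof (rule deriv_psi_mult_cos_two_thirds[OF open_ball elim(1) holo \<kappa>])
      show "cos (\<psi> u) \<noteq> 0"
        using elim(3) by auto
    qed (use inv sin elim(2,3) in simp_all)
    moreover have "((\<lambda>u. (cos (2/3 * \<psi> u))\<^sup>2) has_field_derivative
        - 4/3 * sin (2/3 * \<psi> u) * (deriv \<psi> u * cos (2/3 * \<psi> u))) (at u)"
      by (rule derivative_eq_intros d\<psi> refl | simp add: algebra_simps)+
    ultimately show ?case
      by (simp add: DERIV_imp_deriv mult.assoc)
  qed
qed

definition nabla_ode :: "real \<Rightarrow> complex \<Rightarrow> complex \<Rightarrow> complex" where
  "nabla_ode \<kappa> y y' =
     (y'\<^sup>2 - 16/9 * ((of_real \<kappa>)\<^sup>2 - 1/2) * (1 - y))\<^sup>2 - (16/9)\<^sup>2 * (1 - y)\<^sup>2 * y * (2 * y - 3/2)\<^sup>2"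

lemma nabla_ode_cos_two_thirds_sq_algebraic:
  assumes sin: "sin y = of_real \<kappa> * s" and pyth: "s\<^sup>2 + c\<^sup>2 = 1"
  shows "nabla_ode \<kappa> ((cos (2/3 * y))\<^sup>2) (- 4/3 * sin (2/3 * y) * of_real \<kappa> * c) = 0"
proof -
  define k where "k = (of_real \<kappa> :: complex)"
  define C where "C = cos (2/3 * y)"
  define S where "S = sin (2/3 * y)"
  have "S\<^sup>2 = 1 - C\<^sup>2"
    using sin_cos_squared_add[of "2/3 * y"] unfolding S_def C_def by algebra
  moreover have "k\<^sup>2 * c\<^sup>2 = k\<^sup>2 - (sin y)\<^sup>2"
    using sin pyth unfolding k_def by algebra
  moreover have "2 * (sin y)\<^sup>2 = 1 - (4 * C ^ 3 - 3 * C)"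
    using cos_treble_cos[of "2/3 * y"] cos_double_sin[of y] unfolding C_def by (simp, algebra)
  ultimately show ?thesis
    unfolding nabla_ode_def k_def[symmetric] C_def[symmetric] S_def[symmetric] by algebra
qed

lemma nabla_ode_cos_two_thirds_sq:
  fixes \<phi> \<psi> :: "complex \<Rightarrow> complex"
  assumes \<kappa>: "\<bar>\<kappa>\<bar> \<le> 1" and r: "0 < r"
    and holo: "\<phi> holomorphic_on ball 0 r" "\<psi> holomorphic_on ball 0 r" and zero: "\<phi> 0 = 0" "\<psi> 0 = 0"
    and inv: "\<forall>u\<in>ball 0 r. u_of_phi \<kappa> (\<phi> u) = u"
    and sin: "\<forall>u\<in>ball 0 r. sin (\<psi> u) = of_real \<kappa> * sin (\<phi> u)"
  shows "eventually (\<lambda>u. nabla_ode \<kappa> ((cos (2/3 * \<psi> u))\<^sup>2) (deriv (\<lambda>u. (cos (2/3 * \<psi> u))\<^sup>2) u) = 0) (nhds 0)"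
proof -
  have "eventually (\<lambda>u. u \<in> ball 0 r) (nhds 0)"
    using r by (intro eventually_nhds_in_open) auto
  with deriv_cos_two_thirds_sq[OF assms] show ?thesis
  proof eventually_elim
    case (elim u)
    then show ?case
      using nabla_ode_cos_two_thirds_sq_algebraic[OF sin[rule_format, OF elim(2)] sin_cos_squared_add]
      by simp
  qed
qed

lemma complex_sin_eq_0_imp_eq_0:
  fixes z :: complex
  assumes "sin z = 0" "norm z < pi"
  shows "z = 0"
proof -
  obtain n :: int where n: "z = of_real (of_int n * pi)"
    using assms(1) by (auto simp: sin_eq_0)
  have "norm z = \<bar>of_int n * pi\<bar>"
    unfolding n by (rule norm_of_real)
  then have "\<bar>of_int n\<bar> * pi < 1 * pi"
    using assms(2) by (simp add: abs_mult)
  then have "\<bar>of_int n\<bar> < (1::real)"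
    using pi_gt_zero by (simp only: mult_less_cancel_right)
  then have "n = 0"
    by linarith
  then show ?thesis
    using n by simp
qed

lemma not_eventually_cos_two_thirds_sq_eq_1:
  fixes \<phi> \<psi> :: "complex \<Rightarrow> complex"
  assumes \<kappa>: "\<kappa> \<noteq> 0" and r: "0 < r" and \<psi>: "\<psi> holomorphic_on ball 0 r" "\<psi> 0 = 0"
    and inv: "\<forall>u\<in>ball 0 r. u_of_phi \<kappa> (\<phi> u) = u"
    and sin: "\<forall>u\<in>ball 0 r. sin (\<psi> u) = of_real \<kappa> * sin (\<phi> u)"
  shows "\<not> eventually (\<lambda>u. (cos (2/3 * \<psi> u))\<^sup>2 = 1) (nhds 0)"
proof
  assume one: "eventually (\<lambda>u. (cos (2/3 * \<psi> u))\<^sup>2 = 1) (nhds 0)"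
  have "isCont \<psi> 0"
    using continuous_on_interior[OF holomorphic_on_imp_continuous_on[OF \<psi>(1)]] r by simp
  moreover have "eventually (\<lambda>z. z \<in> ball (0::complex) 1) (nhds 0)"
    by (intro eventually_nhds_in_open) auto
  ultimately have "eventually (\<lambda>u. norm (\<psi> u) < 1) (nhds 0)"
    using eventually_nhds_compose_isCont \<psi>(2) by fastforce
  moreover have "eventually (\<lambda>u. u \<in> ball 0 r) (nhds 0)"
    using r by (intro eventually_nhds_in_open) auto
  ultimately have "eventually (\<lambda>u. u = 0) (nhds (0::complex))"
    using one
  proof eventually_elim
    case (elim u)
    have "(sin (2/3 * \<psi> u))\<^sup>2 = 0"
      using elim(3) sin_cos_squared_add[of "2/3 * \<psi> u"] by simp
    moreover have "norm (2/3 * \<psi> u) < pi"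
      using elim(1) pi_gt3 by (simp add: norm_mult)
    ultimately have "\<psi> u = 0"
      using complex_sin_eq_0_imp_eq_0[of "2/3 * \<psi> u"] by simp
    then have "sin (\<phi> u) = 0"
      using sin[rule_format, OF elim(2)] \<kappa> by simp
    then show "u = 0"
      using inv[rule_format, OF elim(2)] by (simp add: u_of_phi_def)
  qed
  then have "eventually (\<lambda>u. False) (at (0::complex))"
    by (auto simp: eventually_at_filter elim: eventually_mono)
  then show False
    by (simp add: at_neq_bot)
qed

section \<open>Elliptic functions\<close>

lemma periodic_of_int_mult:
  fixes G :: "complex \<Rightarrow> complex"
  assumes "\<And>z. G (z + w) = G z"
  shows "G (z + of_int n * w) = G z"
proof -
  have nat: "G (z + of_nat m * w) = G z" for z m
  proof (induction m)
    case (Suc m)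
    have "G (z + of_nat (Suc m) * w) = G ((z + of_nat m * w) + w)"
      by (simp add: algebra_simps)
    then show ?case using assms Suc by simp
  qed simp
  show ?thesis
  proof (cases "n \<ge> 0")
    case True
    then show ?thesis using nat[of z "nat n"] by simp
  next
    case False
    then have "G z = G ((z + of_int n * w) + of_nat (nat (- n)) * w)" by simp
    then show ?thesis using nat by simp
  qed
qed

lemma ex_real_coords_if_independent:
  fixes z w1 w2 :: complex
  assumes "Im (w2 * cnj w1) \<noteq> 0"
  shows "\<exists>a b :: real. z = of_real a * w1 + of_real b * w2"
proof -
  define D where "D = Im (w2 * cnj w1)"
  define A where "A = Im (z * cnj w1)"
  define B where "B = Im (z * cnj w2)"
  have "z * of_real D = of_real A * w2 - of_real B * w1"
    unfolding A_def B_def D_def by (simp add: complex_eq_iff algebra_simps)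
  moreover have D: "D \<noteq> 0"
    using assms by (simp add: D_def)
  ultimately have "z = (of_real A * w2 - of_real B * w1) / of_real D"
    by (simp add: field_simps)
  also have "\<dots> = of_real (- B / D) * w1 + of_real (A / D) * w2"
    using D by (simp add: field_simps)
  finally show ?thesis by blast
qed

lemma doubly_periodic_entire_imp_constant:
  fixes K :: "complex \<Rightarrow> complex"
  assumes K: "K holomorphic_on UNIV" and indep: "Im (w2 * cnj w1) \<noteq> 0"
    and per: "\<And>z. K (z + w1) = K z" "\<And>z. K (z + w2) = K z"
  shows "K z = K 0"
proof -
  define T where "T = (\<lambda>(a, b). of_real a * w1 + of_real b * w2) ` ({0..1::real} \<times> {0..1::real})"
  have "compact T"
    unfolding T_def case_prod_unfold
    by (intro compact_continuous_image compact_Times compact_Icc continuous_intros)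
  then have "compact (K ` T)"
    using K by (meson compact_continuous_image holomorphic_on_imp_continuous_on holomorphic_on_subset subset_UNIV)
  moreover have "range K \<subseteq> K ` T"
  proof clarify
    fix z
    obtain a b :: real where ab: "z = of_real a * w1 + of_real b * w2"
      using ex_real_coords_if_independent[OF indep] by blast
    define t where "t = of_real (frac a) * w1 + of_real (frac b) * w2"
    have "t \<in> T"
      unfolding t_def T_def using frac_ge_0 frac_lt_1 by (force intro: less_imp_le)
    moreover have "z = (t + of_int \<lfloor>a\<rfloor> * w1) + of_int \<lfloor>b\<rfloor> * w2"
      unfolding ab t_def frac_def by (simp add: algebra_simps)
    then have "K z = K t"
      using periodic_of_int_mult[of K w1] periodic_of_int_mult[of K w2] per by simp
    ultimately show "K z \<in> K ` T" by blast
  qed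
  ultimately have "bounded (range K)"
    by (meson bounded_subset compact_imp_bounded)
  then show ?thesis
    using Liouville_theorem[OF K] by (auto simp: constant_on_def)
qed

lemma remove_sings_periodic:
  assumes "\<And>z. g (z + w) = g z"
  shows "remove_sings g (z + w) = remove_sings g z"
proof -
  have "filtermap (\<lambda>z. z + w) (at z) = at (z + w)"
    using filtermap_at_shift[of "- w" z] by simp
  then have "remove_sings (g \<circ> (\<lambda>z. z + w)) z = remove_sings g (z + w)"
    by (rule remove_sings_compose)
  moreover have "g \<circ> (\<lambda>z. z + w) = g"
    using assms by (auto simp: o_def)
  ultimately show ?thesis by simp
qed

lemma zero_free_doubly_periodic_imp_constant:
  assumes G: "G nicely_meromorphic_on UNIV" and nz: "\<And>z. \<not> is_pole G z \<Longrightarrow> G z \<noteq> 0"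
    and indep: "Im (w2 * cnj w1) \<noteq> 0"
    and per: "\<And>z. G (z + w1) = G z" "\<And>z. G (z + w2) = G z"
  shows "G z = G 0"
proof -
  have inv: "(\<lambda>z. inverse (G z)) nicely_meromorphic_on UNIV"
    by (rule nicely_meromorphic_on_inverse[OF G])
  have "\<not> is_pole (\<lambda>z. inverse (G z)) z" for z
  proof
    assume "is_pole (\<lambda>z. inverse (G z)) z"
    then have "G \<midarrow>z\<rightarrow> 0"
      by (simp add: is_pole_inverse_iff isolated_zero_def)
    moreover from this have "\<not> is_pole G z"
      unfolding is_pole_def using not_tendsto_and_filterlim_at_infinity[OF trivial_limit_at] by blast
    ultimately have "G z = 0"
      using G by (auto simp: nicely_meromorphic_on_def dest: tendsto_unique[OF trivial_limit_at])
    then show False using nz \<open>\<not> is_pole G z\<close> by blast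
  qed
  then have "(\<lambda>z. inverse (G z)) holomorphic_on UNIV"
    using nicely_meromorphic_on_imp_analytic_at[OF inv]
    by (metis analytic_imp_holomorphic analytic_on_analytic_at UNIV_I)
  then have "inverse (G z) = inverse (G 0)"
    by (rule doubly_periodic_entire_imp_constant[OF _ indep]) (simp_all add: per)
  then show ?thesis by simp
qed

lemma meromorphic_eventually_zero_imp_zero:
  assumes f: "f meromorphic_on UNIV" and ev: "eventually (\<lambda>z. f z = 0) (at w)"
    and z: "f analytic_on {z}"
  shows "f z = 0"
proof -
  have "eventually (\<lambda>w. remove_sings f w = f w) (at w)"
    using meromorphic_on_subset[OF f, of "{w}"]
    by (intro eventually_remove_sings_eq_at meromorphic_on_isolated_singularity) auto
  with ev have "frequently (\<lambda>w. remove_sings f w = 0) (at w)"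
    by (intro eventually_frequently) (auto elim: eventually_elim2)
  then have "remove_sings f z = 0"
    using frequently_eq_meromorphic_imp_constant[OF _ remove_sings_nicely_meromorphic[OF f]] by blast
  then show ?thesis
    using z by simp
qed

lemma zorder_eq_double_if_square:
  fixes G R h :: "complex \<Rightarrow> complex"
  assumes an: "G analytic_on {z0}" "R analytic_on {z0}" "h analytic_on {z0}" and R: "R z0 \<noteq> 0"
    and G: "eventually (\<lambda>z. G z \<noteq> 0) (at z0)"
    and sq: "eventually (\<lambda>z. (h z)\<^sup>2 = R z * G z) (at z0)"
  shows "eventually (\<lambda>z. h z \<noteq> 0) (at z0)" "zorder G z0 = 2 * zorder h z0"
proof -
  have "eventually (\<lambda>z. R z \<noteq> 0) (at z0)"
    using R analytic_at_imp_isCont[OF an(2)] by (intro tendsto_imp_eventually_ne) (auto simp: isCont_def)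
  with G have RG: "eventually (\<lambda>z. R z * G z \<noteq> 0) (at z0)"
    by eventually_elim simp
  with sq show h: "eventually (\<lambda>z. h z \<noteq> 0) (at z0)"
    by eventually_elim auto
  have "zorder G z0 = zorder (\<lambda>z. R z * G z) z0"
    using zorder_times_analytic[OF an(2,1) RG] zorder_eq_0I[OF an(2) R] by simp
  also have "\<dots> = zorder (\<lambda>z. (h z)\<^sup>2) z0"
    by (rule zorder_cong[OF sq[THEN eventually_mono, of "\<lambda>z. R z * G z = (h z)\<^sup>2"] refl]) auto
  also have "\<dots> = 2 * zorder h z0"
    using zorder_power[OF analytic_on_imp_meromorphic_on[OF an(3)] eventually_frequently[OF _ h], of 2]
    by simp
  finally show "zorder G z0 = 2 * zorder h z0" .
qed

lemma deriv_square_ode_no_zero: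
  fixes G R :: "complex \<Rightarrow> complex"
  assumes G: "G analytic_on {z0}" "G z0 = 0" "frequently (\<lambda>z. G z \<noteq> 0) (at z0)"
    and R: "R analytic_on {z0}" "R z0 \<noteq> 0"
    and ode: "eventually (\<lambda>z. ((deriv G z)\<^sup>2 - \<alpha> * (1 - G z))\<^sup>2 = R z * G z) (nhds z0)"
  shows False
proof -
  define h where "h z = (deriv G z)\<^sup>2 - \<alpha> * (1 - G z)" for z
  define m where "m = zorder G z0"
  have dG: "deriv G analytic_on {z0}"
    using G(1) by (rule analytic_deriv)
  have m: "m > 0"
    using zorder_pos_iff'[OF G(1,3)] G(2) by (simp add: m_def)
  have zd: "zorder (deriv G) z0 = m - 1"
    unfolding m_def using G m
    by (intro zorder_deriv_minus_1 isolated_singularity_at_analytic not_essential_analytic) (auto simp: m_def)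
  have "eventually (\<lambda>z. G z \<noteq> 0) (at z0)"
    using non_isolated_zero_imp_eventually_zero[OF G(1,2)] G(3) by (auto simp: isolated_zero_def frequently_def)
  moreover have "eventually (\<lambda>z. (h z)\<^sup>2 = R z * G z) (at z0)"
    using ode by (simp add: eventually_nhds_conv_at h_def)
  moreover have "h analytic_on {z0}"
    unfolding h_def by (intro analytic_intros G(1) dG)
  ultimately have h: "eventually (\<lambda>z. h z \<noteq> 0) (at z0)" and m_h: "m = 2 * zorder h z0"
    using zorder_eq_double_if_square[OF G(1) R(1) _ R(2)] by (auto simp: m_def)
  have h0: "h z0 = 0"
    using eventually_nhds_x_imp_x[OF ode] G(2) by (simp add: h_def)
  show False
  proof (cases "\<alpha> = 0")
    case False
    then have "deriv G z0 \<noteq> 0"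
      using h0 G(2) by (auto simp: h_def)
    then have "m = 1"
      using zorder_eq_0I[OF dG] zd by simp
    then show False using m_h by presburger
  next
    case True
    then have h_eq: "h = (\<lambda>z. (deriv G z)\<^sup>2)"
      by (simp add: h_def fun_eq_iff)
    have "frequently (\<lambda>z. deriv G z \<noteq> 0) (at z0)"
      using eventually_frequently[OF _ h] unfolding h_eq by (auto elim: frequently_elim1)
    then have "zorder h z0 = 2 * (m - 1)"
      using zorder_power[OF analytic_on_imp_meromorphic_on[OF dG]] zd h_eq by simp
    then show False using m_h by presburger
  qed
qed

lemma nabla_ode_global:
  assumes G: "G nicely_meromorphic_on UNIV"
    and ev: "eventually (\<lambda>z. nabla_ode \<kappa> (G z) (deriv G z) = 0) (nhds 0)"
    and z: "\<not> is_pole G z"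
  shows "nabla_ode \<kappa> (G z) (deriv G z) = 0"
proof (rule meromorphic_eventually_zero_imp_zero[where f = "\<lambda>z. nabla_ode \<kappa> (G z) (deriv G z)"])
  show "(\<lambda>z. nabla_ode \<kappa> (G z) (deriv G z)) meromorphic_on UNIV"
    using G unfolding nabla_ode_def nicely_meromorphic_on_def by (intro meromorphic_intros) auto
  show "eventually (\<lambda>z. nabla_ode \<kappa> (G z) (deriv G z) = 0) (at 0)"
    using ev by (simp add: eventually_nhds_conv_at)
  have "G analytic_on {z}"
    using nicely_meromorphic_on_imp_analytic_at[OF G _ z] by simp
  then show "(\<lambda>z. nabla_ode \<kappa> (G z) (deriv G z)) analytic_on {z}"
    unfolding nabla_ode_def by (intro analytic_intros analytic_deriv)
qed

lemma nabla_ode_solution_zero_free: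
  assumes G: "G nicely_meromorphic_on UNIV" "G u \<noteq> 0"
    and ode: "\<And>z. \<not> is_pole G z \<Longrightarrow> nabla_ode \<kappa> (G z) (deriv G z) = 0"
    and z: "\<not> is_pole G z"
  shows "G z \<noteq> 0"
proof
  assume G0: "G z = 0"
  define R where "R w = (16/9)\<^sup>2 * (1 - G w)\<^sup>2 * (2 * G w - 3/2)\<^sup>2" for w
  have Gz: "G analytic_on {z}"
    using nicely_meromorphic_on_imp_analytic_at[OF G(1) _ z] by simp
  have "frequently (\<lambda>w. G w \<noteq> 0) (at z)"
  proof (rule ccontr)
    assume "\<not> frequently (\<lambda>w. G w \<noteq> 0) (at z)"
    then have "frequently (\<lambda>w. G w = 0) (at z)"
      by (intro eventually_frequently) (auto simp: not_frequently)
    then have "G u = 0"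
      using frequently_eq_meromorphic_imp_constant[OF _ G(1)] by blast
    with G(2) show False ..
  qed
  moreover have "eventually (\<lambda>w. ((deriv G w)\<^sup>2 - 16/9 * ((of_real \<kappa>)\<^sup>2 - 1/2) * (1 - G w))\<^sup>2 = R w * G w) (nhds z)"
  proof -
    obtain S where S: "open S" "z \<in> S" "G holomorphic_on S"
      using Gz analytic_at by blast
    have "eventually (\<lambda>w. w \<in> S) (nhds z)"
      using S by (intro eventually_nhds_in_open)
    then show ?thesis
    proof eventually_elim
      case (elim w)
      then have "\<not> is_pole G w"
        using S by (meson analytic_at analytic_at_imp_no_pole)
      then show ?case
        using ode by (simp add: nabla_ode_def R_def)
    qed
  qed
  moreover have "R analytic_on {z}" "R z \<noteq> 0"
    unfolding R_def using G0 by (auto intro!: analytic_intros Gz)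
  ultimately show False
    by (intro deriv_square_ode_no_zero[OF Gz G0])
qed

lemma elliptic_nabla_ode_solution_constant:
  assumes g: "elliptic g" "g analytic_on {0}" "g 0 \<noteq> 0"
    and ode: "eventually (\<lambda>z. nabla_ode \<kappa> (g z) (deriv g z) = 0) (nhds 0)"
  shows "eventually (\<lambda>z. g z = g 0) (nhds 0)"
proof -
  obtain w1 w2 where mero: "g meromorphic_on UNIV" and indep: "Im (w2 * cnj w1) \<noteq> 0"
    and per: "\<And>z. g (z + w1) = g z" "\<And>z. g (z + w2) = g z"
    using g(1) unfolding elliptic_def by blast
  define G where "G = remove_sings g"
  have G: "G nicely_meromorphic_on UNIV"
    unfolding G_def by (rule remove_sings_nicely_meromorphic[OF mero])
  have Gg: "eventually (\<lambda>z. G z = g z) (nhds 0)"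
    unfolding G_def by (rule eventually_remove_sings_eq_nhds[OF g(2)])
  have "eventually (\<lambda>z. nabla_ode \<kappa> (G z) (deriv G z) = 0) (nhds 0)"
    using Gg eventually_deriv_cong[OF Gg] ode by eventually_elim simp
  then have "nabla_ode \<kappa> (G z) (deriv G z) = 0" if "\<not> is_pole G z" for z
    using nabla_ode_global[OF G _ that] by blast
  moreover have "G 0 \<noteq> 0"
    using g(2,3) by (simp add: G_def)
  ultimately have "G z \<noteq> 0" if "\<not> is_pole G z" for z
    using nabla_ode_solution_zero_free[OF G] that by blast
  moreover have "G (z + w1) = G z" "G (z + w2) = G z" for z
    unfolding G_def using remove_sings_periodic per by blast+
  ultimately have "G z = G 0" for z
    by (intro zero_free_doubly_periodic_imp_constant[OF G _ indep])
  then show ?thesis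
    using Gg eventually_nhds_x_imp_x[OF Gg] by (auto elim: eventually_mono)
qed

theorem theorem10:
  fixes \<kappa> :: real and r :: real and \<phi> \<psi> :: "complex \<Rightarrow> complex"
  assumes "0 < \<kappa>" and "\<kappa> < 1" and "0 < r"
    and "\<phi> holomorphic_on ball 0 r" and "\<phi> 0 = 0"
    and "\<forall>u\<in>ball 0 r. u_of_phi \<kappa> (\<phi> u) = u"
    and "\<psi> holomorphic_on ball 0 r" and "\<psi> 0 = 0"
    and "\<forall>u\<in>ball 0 r. sin (\<psi> u) = complex_of_real \<kappa> * sin (\<phi> u)"
  shows "\<not> (\<exists>g. elliptic g \<and> (\<forall>u\<in>ball 0 r. g u = (cos (2/3 * \<psi> u))\<^sup>2))"
proof
  assume "\<exists>g. elliptic g \<and> (\<forall>u\<in>ball 0 r. g u = (cos (2/3 * \<psi> u))\<^sup>2)"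
  then obtain g where g: "elliptic g" and g_eq: "\<forall>u\<in>ball 0 r. g u = (cos (2/3 * \<psi> u))\<^sup>2"
    by blast
  define N where "N = (\<lambda>u. (cos (2/3 * \<psi> u))\<^sup>2)"
  have "eventually (\<lambda>u. u \<in> ball 0 r) (nhds 0)"
    using assms(3) by (intro eventually_nhds_in_open) auto
  then have gN: "eventually (\<lambda>u. g u = N u) (nhds 0)"
    by eventually_elim (simp add: g_eq N_def)
  have "g holomorphic_on ball 0 r"
    by (rule holomorphic_transform[of N]) (simp_all add: g_eq N_def holomorphic_intros assms(7))
  then have "g analytic_on {0}"
    using assms(3) unfolding analytic_at by (intro exI[of _ "ball 0 r"]) auto
  moreover have g0: "g 0 = 1"
    using g_eq assms(3,8) by simp
  moreover have "eventually (\<lambda>u. nabla_ode \<kappa> (N u) (deriv N u) = 0) (nhds 0)"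
    unfolding N_def using assms by (intro nabla_ode_cos_two_thirds_sq[of \<kappa> r]) auto
  with gN eventually_deriv_cong[OF gN] have "eventually (\<lambda>u. nabla_ode \<kappa> (g u) (deriv g u) = 0) (nhds 0)"
    by eventually_elim simp
  ultimately have "eventually (\<lambda>u. g u = g 0) (nhds 0)"
    by (intro elliptic_nabla_ode_solution_constant[OF g]) simp_all
  with gN have "eventually (\<lambda>u. N u = 1) (nhds 0)"
    by eventually_elim (simp add: g0)
  then show False
    using not_eventually_cos_two_thirds_sq_eq_1[of \<kappa> r \<psi> \<phi>] assms by (simp add: N_def)
qed

end
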